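(* In each of the following pairs $(\mathfrak g,\mathfrak g_0)$ of real $4$-dimensional Lie algebras, $\mathfrak g_0$ is not a (continuous or sequential) contraction of $\mathfrak g$ over $\mathbb R$: $(so(3)\oplus A_1,\,A_{4.8}^{-1})$, $(so(3)\oplus A_1,\,A_{3.4}^{-1}\oplus A_1)$, $(A_{4.8}^{-1},\,A_{3.5}^0\oplus A_1)$, $(A_{4.9}^0,\,A_{3.4}^{-1}\oplus A_1)$, $(A_{4.10},\,A_{4.3})$, $(A_{4.10},\,A_{2.1}\oplus2A_1)$, $(A_{4.10},\,A_{3.4}^a\oplus A_1)$ for every $a$ with $0<|a|<1$, and $(2A_{2.1},\,A_{3.5}^b\oplus A_1)$ for every $b>0$.
   Context: All algebras have basis $e_1,\dots,e_4$; only nonzero brackets (up to antisymmetry) are listed. $so(3)\oplus A_1$: $[e_1,e_2]=e_3$, $[e_2,e_3]=e_1$, $[e_3,e_1]=e_2$. $A_{4.8}^{-1}$: $[e_2,e_3]=e_1$, $[e_2,e_4]=e_2$, $[e_3,e_4]=-e_3$. $A_{3.4}^{-1}\oplus A_1$: $[e_1,e_3]=e_1$, $[e_2,e_3]=-e_2$. $A_{3.5}^0\oplus A_1$: $[e_1,e_3]=-e_2$, $[e_2,e_3]=e_1$. $A_{4.9}^0$: $[e_2,e_3]=e_1$, $[e_2,e_4]=-e_3$, $[e_3,e_4]=e_2$. $A_{4.10}$: $[e_1,e_3]=e_1$, $[e_2,e_3]=e_2$, $[e_1,e_4]=-e_2$, $[e_2,e_4]=e_1$. $A_{4.3}$: $[e_1,e_4]=e_1$,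 $[e_3,e_4]=e_2$. $A_{2.1}\oplus2A_1$: $[e_1,e_2]=e_1$. $A_{3.4}^a\oplus A_1$: $[e_1,e_3]=e_1$, $[e_2,e_3]=ae_2$. $2A_{2.1}$: $[e_1,e_2]=e_1$, $[e_3,e_4]=e_3$. $A_{3.5}^b\oplus A_1$: $[e_1,e_3]=be_1-e_2$, $[e_2,e_3]=e_1+be_2$. Continuous contraction of $\mathfrak g=(V,[\cdot,\cdot])$: for continuous $U:(0,1]\to GL(V)$, the algebra $(V,[\cdot,\cdot]_0)$ with $[x,y]_0=\lim_{\varepsilon\to0^+}U_\varepsilon^{-1}[U_\varepsilon x,U_\varepsilon y]$ when this limit exists for all $x,y$; sequential contraction: same with a sequence $U_p\in GL(V)$ and $p\to\infty$. "Contraction of $\mathfrak g$ is $\mathfrak g_0$" means the resulting algebra is isomorphic to $\mathfrak g_0$. *)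

theory Defs
  imports "HOL-Analysis.Analysis"
begin

text \<open>Vectors of the 4-dimensional real space; basis vector e_k is axis k 1
  (indices 1,2,3,4 of the numeral type 4).\<close>

definition e :: "4 \<Rightarrow> real^4" where "e k = axis k 1"

text \<open>Bilinear antisymmetric bracket determined by a list of nonzero brackets
  [e_i, e_j] = v (given for i before j; antisymmetry supplies the rest).\<close>

definition lie_br :: "(4 \<times> 4 \<times> (real^4)) list \<Rightarrow> real^4 \<Rightarrow> real^4 \<Rightarrow> real^4" where
  "lie_br L x y = (\<Sum>(i,j,v)\<leftarrow>L. (x$i * y$j - x$j * y$i) *\<^sub>R v)"

definition so3_A1 where "so3_A1 = lie_br [(1,2,e 3), (2,3,e 1), (3,1,e 2)]"
definition A4_8m1 where "A4_8m1 = lie_br [(2,3,e 1), (2,4,e 2), (3,4,- e 3)]"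
definition A3_4m1_A1 where "A3_4m1_A1 = lie_br [(1,3,e 1), (2,3,- e 2)]"
definition A3_5_0_A1 where "A3_5_0_A1 = lie_br [(1,3,- e 2), (2,3,e 1)]"
definition A4_9_0 where "A4_9_0 = lie_br [(2,3,e 1), (2,4,- e 3), (3,4,e 2)]"
definition A4_10 where "A4_10 = lie_br [(1,3,e 1), (2,3,e 2), (1,4,- e 2), (2,4,e 1)]"
definition A4_3 where "A4_3 = lie_br [(1,4,e 1), (3,4,e 2)]"
definition A2_1_2A1 where "A2_1_2A1 = lie_br [(1,2,e 1)]"
definition A3_4_A1 :: "real \<Rightarrow> real^4 \<Rightarrow> real^4 \<Rightarrow> real^4" where
  "A3_4_A1 a = lie_br [(1,3,e 1), (2,3,a *\<^sub>R e 2)]"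
definition two_A2_1 where "two_A2_1 = lie_br [(1,2,e 1), (3,4,e 3)]"
definition A3_5_A1 :: "real \<Rightarrow> real^4 \<Rightarrow> real^4 \<Rightarrow> real^4" where
  "A3_5_A1 b = lie_br [(1,3,b *\<^sub>R e 1 - e 2), (2,3,e 1 + b *\<^sub>R e 2)]"

definition lie_iso :: "(real^4 \<Rightarrow> real^4 \<Rightarrow> real^4) \<Rightarrow> (real^4 \<Rightarrow> real^4 \<Rightarrow> real^4) \<Rightarrow> bool" where
  "lie_iso b b' \<longleftrightarrow> (\<exists>A :: real^4^4. invertible A \<and>
      (\<forall>x y. A *v b x y = b' (A *v x) (A *v y)))"

definition cont_contraction :: "(real^4 \<Rightarrow> real^4 \<Rightarrow> real^4) \<Rightarrow> (real^4 \<Rightarrow> real^4 \<Rightarrow> real^4) \<Rightarrow> bool" where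
  "cont_contraction g g0 \<longleftrightarrow> (\<exists>(U :: real \<Rightarrow> real^4^4) b0.
      continuous_on {0<..1} U \<and> (\<forall>\<epsilon>\<in>{0<..1}. invertible (U \<epsilon>)) \<and>
      (\<forall>x y. ((\<lambda>\<epsilon>. matrix_inv (U \<epsilon>) *v g (U \<epsilon> *v x) (U \<epsilon> *v y)) \<longlongrightarrow> b0 x y) (at_right 0)) \<and>
      lie_iso b0 g0)"

definition seq_contraction :: "(real^4 \<Rightarrow> real^4 \<Rightarrow> real^4) \<Rightarrow> (real^4 \<Rightarrow> real^4 \<Rightarrow> real^4) \<Rightarrow> bool" where
  "seq_contraction g g0 \<longleftrightarrow> (\<exists>(U :: nat \<Rightarrow> real^4^4) b0.
      (\<forall>p. invertible (U p)) \<and>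
      (\<forall>x y. (\<lambda>p. matrix_inv (U p) *v g (U p *v x) (U p *v y)) \<longlonglongrightarrow> b0 x y) \<and>
      lie_iso b0 g0)"

definition not_contraction where
  "not_contraction g g0 \<longleftrightarrow> \<not> cont_contraction g g0 \<and> \<not> seq_contraction g g0"

end

theory Submission
  imports Defs
begin

text \<open>For a bracket \<open>B\<close>, the quadratic function
  \<open>x \<mapsto> \<alpha> tr(ad x)\<^sup>2 + \<beta> tr(ad x \<circ> ad x)\<close> is invariant under change of basis and depends
  continuously on the structure constants. Hence if it is nonnegative on \<open>\<g>\<close>, it is nonnegative
  on every algebra \<open>U\<^sup>-\<^sup>1[U x, U y]\<close> and on every limit of such algebras, i.e. on every contraction
  of \<open>\<g>\<close>. For each pair, one choice of \<open>(\<alpha>, \<beta>)\<close> makes it nonnegative on \<open>\<g>\<close> but negative at a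
  basis vector of \<open>\<g>\<^sub>0\<close>.\<close>

lemma matrix_inv_right: "invertible A \<Longrightarrow> A ** matrix_inv A = mat 1"
  and matrix_inv_left: "invertible A \<Longrightarrow> matrix_inv A ** A = mat 1"
  for A :: "'a::semiring_1^'n^'n"
  unfolding invertible_def matrix_inv_def by (metis (mono_tags, lifting) someI_ex)+

definition ad_trace :: "(real^'n \<Rightarrow> real^'n \<Rightarrow> real^'n) \<Rightarrow> real^'n \<Rightarrow> real"
  where "ad_trace B x = trace (matrix (B x))"

definition killing_quadratic :: "(real^'n \<Rightarrow> real^'n \<Rightarrow> real^'n) \<Rightarrow> real^'n \<Rightarrow> real"
  where "killing_quadratic B x = trace (matrix (B x) ** matrix (B x))"

definition trace_quadratic ::
    "real \<Rightarrow> real \<Rightarrow> (real^'n \<Rightarrow> real^'n \<Rightarrow> real^'n) \<Rightarrow> real^'n \<Rightarrow> real"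
  where "trace_quadratic \<alpha> \<beta> B x = \<alpha> * (ad_trace B x)\<^sup>2 + \<beta> * killing_quadratic B x"

definition conj_bracket ::
    "real^'n^'n \<Rightarrow> (real^'n \<Rightarrow> real^'n \<Rightarrow> real^'n) \<Rightarrow> real^'n \<Rightarrow> real^'n \<Rightarrow> real^'n"
  where "conj_bracket U B = (\<lambda>x y. matrix_inv U *v B (U *v x) (U *v y))"

lemma ad_trace_eq_sum: "ad_trace B x = (\<Sum>i\<in>UNIV. B x (axis i 1) $ i)"
  by (simp add: ad_trace_def trace_def matrix_def)

lemma killing_quadratic_eq_sum:
  "killing_quadratic B x = (\<Sum>i\<in>UNIV. \<Sum>j\<in>UNIV. B x (axis j 1) $ i * B x (axis i 1) $ j)"
  by (simp add: killing_quadratic_def trace_def matrix_def matrix_matrix_mult_def)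

lemma trace_conj: "invertible U \<Longrightarrow> trace (matrix_inv U ** M ** U) = trace M"
  for U M :: "real^'n^'n"
  by (metis matrix_inv_right matrix_mul_assoc matrix_mul_lid trace_mul_sym)

lemma matrix_conj_bracket:
  assumes "linear (B (U *v x))" "invertible U"
  shows "matrix (conj_bracket U B x) = matrix_inv U ** matrix (B (U *v x)) ** U"
proof -
  have "conj_bracket U B x = (\<lambda>y. (matrix_inv U ** matrix (B (U *v x)) ** U) *v y)"
    using matrix_works[of "B (U *v x)"] assms(1)
    by (simp add: conj_bracket_def matrix_vector_mul_assoc[symmetric] linear_matrix_vector_mul_eq)
  then show ?thesis by simp
qed

lemma trace_quadratic_conj_bracket:
  assumes "\<And>x. linear (B x)" "invertible U"
  shows "trace_quadratic \<alpha> \<beta> (conj_bracket U B) x = trace_quadratic \<alpha> \<beta> B (U *v x)"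
proof -
  let ?M = "matrix (B (U *v x))"
  have "(matrix_inv U ** ?M ** U) ** (matrix_inv U ** ?M ** U)
      = matrix_inv U ** ?M ** (U ** matrix_inv U) ** ?M ** U"
    by (simp add: matrix_mul_assoc)
  also have "\<dots> = matrix_inv U ** (?M ** ?M) ** U"
    by (simp add: matrix_inv_right[OF assms(2)] matrix_mul_assoc)
  finally have "(matrix_inv U ** ?M ** U) ** (matrix_inv U ** ?M ** U)
      = matrix_inv U ** (?M ** ?M) ** U" .
  then show ?thesis
    unfolding trace_quadratic_def ad_trace_def killing_quadratic_def matrix_conj_bracket[OF assms]
    by (simp add: trace_conj[OF assms(2)])
qed

lemma tendsto_trace_quadratic:
  assumes "\<And>x y. ((\<lambda>p. B p x y) \<longlongrightarrow> B0 x y) F"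
  shows "((\<lambda>p. trace_quadratic \<alpha> \<beta> (B p) x) \<longlongrightarrow> trace_quadratic \<alpha> \<beta> B0 x) F"
  unfolding trace_quadratic_def ad_trace_eq_sum killing_quadratic_eq_sum
  by (intro tendsto_intros tendsto_vec_nth assms)

lemma lie_iso_eq_conj_bracket:
  assumes "lie_iso b g0"
  obtains A where "invertible A" "b = conj_bracket A g0"
proof -
  obtain A where A: "invertible A" "\<And>x y. A *v b x y = g0 (A *v x) (A *v y)"
    using assms unfolding lie_iso_def by blast
  have "b x y = conj_bracket A g0 x y" for x y
    by (metis A conj_bracket_def matrix_inv_left matrix_vector_mul_assoc matrix_vector_mul_lid)
  with A(1) show thesis by (intro that) auto
qed

lemma seq_contraction_trace_quadratic_nonneg:
  assumes "seq_contraction g g0" "\<And>x. linear (g x)" "\<And>x. linear (g0 x)"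
    and nonneg: "\<And>x. 0 \<le> trace_quadratic \<alpha> \<beta> g x"
  shows "0 \<le> trace_quadratic \<alpha> \<beta> g0 x"
proof -
  obtain U b0 where U: "\<And>p. invertible (U p)"
    and lim: "\<And>x y. (\<lambda>p. conj_bracket (U p) g x y) \<longlonglongrightarrow> b0 x y" and "lie_iso b0 g0"
    using assms(1) unfolding seq_contraction_def conj_bracket_def by blast
  obtain A where A: "invertible A" "b0 = conj_bracket A g0"
    using \<open>lie_iso b0 g0\<close> by (rule lie_iso_eq_conj_bracket)
  have "0 \<le> trace_quadratic \<alpha> \<beta> b0 z" for z
  proof (rule LIMSEQ_le_const[OF tendsto_trace_quadratic[OF lim]])
    show "\<exists>N. \<forall>p\<ge>N. 0 \<le> trace_quadratic \<alpha> \<beta> (conj_bracket (U p) g) z"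
      using nonneg by (simp add: trace_quadratic_conj_bracket[OF assms(2) U])
  qed
  then have "0 \<le> trace_quadratic \<alpha> \<beta> g0 (A *v (matrix_inv A *v x))"
    by (simp add: A trace_quadratic_conj_bracket[OF assms(3)])
  then show ?thesis
    by (simp add: matrix_vector_mul_assoc matrix_inv_right[OF A(1)])
qed

lemma cont_contraction_imp_seq_contraction:
  assumes "cont_contraction g g0"
  shows "seq_contraction g g0"
proof -
  obtain U :: "real \<Rightarrow> real^4^4" and b0 where U: "\<forall>\<epsilon>\<in>{0<..1}. invertible (U \<epsilon>)"
    and lim: "\<And>x y. ((\<lambda>\<epsilon>. matrix_inv (U \<epsilon>) *v g (U \<epsilon> *v x) (U \<epsilon> *v y)) \<longlongrightarrow> b0 x y) (at_right 0)"
    and "lie_iso b0 g0"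
    using assms unfolding cont_contraction_def by blast
  define \<epsilon> :: "nat \<Rightarrow> real" where "\<epsilon> p = inverse (real (Suc p))" for p
  have "filterlim \<epsilon> (at_right 0) sequentially"
    unfolding \<epsilon>_def
    by (rule tendsto_imp_filterlim_at_right[OF LIMSEQ_inverse_real_of_nat]) auto
  then have "(\<lambda>p. matrix_inv (U (\<epsilon> p)) *v g (U (\<epsilon> p) *v x) (U (\<epsilon> p) *v y)) \<longlonglongrightarrow> b0 x y"
    for x y by (rule filterlim_compose[OF lim])
  moreover have "invertible (U (\<epsilon> p))" for p
    using U by (auto simp: \<epsilon>_def field_simps)
  ultimately show ?thesis
    unfolding seq_contraction_def using \<open>lie_iso b0 g0\<close>
    by (intro exI[of _ "\<lambda>p. U (\<epsilon> p)"] exI[of _ b0]) blast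
qed

lemma not_contraction_by_trace_quadratic:
  assumes "\<And>x. 0 \<le> trace_quadratic \<alpha> \<beta> g x" "trace_quadratic \<alpha> \<beta> g0 w < 0"
    and "\<And>x. linear (g x)" "\<And>x. linear (g0 x)"
  shows "not_contraction g g0"
  using seq_contraction_trace_quadratic_nonneg[of g g0 \<alpha> \<beta> w] assms
  unfolding not_contraction_def by (meson cont_contraction_imp_seq_contraction not_le)

lemma linear_lie_br: "linear (lie_br L x)"
proof (rule linearI)
  show "lie_br L x (y + z) = lie_br L x y + lie_br L x z" for y z
    by (induction L) (auto simp: lie_br_def algebra_simps)
  show "lie_br L x (c *\<^sub>R y) = c *\<^sub>R lie_br L x y" for c y
    by (induction L) (auto simp: lie_br_def algebra_simps)
qed

lemma linear_brackets:
  "linear (so3_A1 x)" "linear (A4_8m1 x)" "linear (A3_4m1_A1 x)" "linear (A3_5_0_A1 x)"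
  "linear (A4_9_0 x)" "linear (A4_10 x)" "linear (A4_3 x)" "linear (A2_1_2A1 x)"
  "linear (A3_4_A1 a x)" "linear (two_A2_1 x)" "linear (A3_5_A1 b x)"
  by (simp_all add: so3_A1_def A4_8m1_def A3_4m1_A1_def A3_5_0_A1_def A4_9_0_def A4_10_def
      A4_3_def A2_1_2A1_def A3_4_A1_def two_A2_1_def A3_5_A1_def linear_lie_br)

lemmas bracket_coordinates = ad_trace_eq_sum killing_quadratic_eq_sum lie_br_def e_def axis_def
  sum_4 power2_eq_square algebra_simps

lemma trace_quadratic_so3_A1:
  "trace_quadratic 0 (-1) so3_A1 x = 2 * ((x$1)\<^sup>2 + (x$2)\<^sup>2 + (x$3)\<^sup>2)"
  by (simp add: trace_quadratic_def so3_A1_def bracket_coordinates)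

lemma trace_quadratic_A4_8m1: "trace_quadratic 0 1 A4_8m1 x = 2 * (x$4)\<^sup>2"
  by (simp add: trace_quadratic_def A4_8m1_def bracket_coordinates)

lemma trace_quadratic_A4_9_0: "trace_quadratic 0 (-1) A4_9_0 x = 2 * (x$4)\<^sup>2"
  by (simp add: trace_quadratic_def A4_9_0_def bracket_coordinates)

lemma trace_quadratic_A4_10: "trace_quadratic 1 (-2) A4_10 x = 4 * (x$4)\<^sup>2"
  by (simp add: trace_quadratic_def A4_10_def bracket_coordinates)

lemma trace_quadratic_two_A2_1: "trace_quadratic (-1) 2 two_A2_1 x = (x$2 - x$4)\<^sup>2"
  by (simp add: trace_quadratic_def two_A2_1_def bracket_coordinates)

lemma trace_quadratic_A4_8m1_e4: "trace_quadratic 0 (-1) A4_8m1 (e 4) = -2"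
  by (simp add: trace_quadratic_def A4_8m1_def bracket_coordinates)

lemma trace_quadratic_A3_4m1_A1_e3: "trace_quadratic 0 (-1) A3_4m1_A1 (e 3) = -2"
  by (simp add: trace_quadratic_def A3_4m1_A1_def bracket_coordinates)

lemma trace_quadratic_A3_5_0_A1_e3: "trace_quadratic 0 1 A3_5_0_A1 (e 3) = -2"
  by (simp add: trace_quadratic_def A3_5_0_A1_def bracket_coordinates)

lemma trace_quadratic_A4_3_e4: "trace_quadratic 1 (-2) A4_3 (e 4) = -1"
  by (simp add: trace_quadratic_def A4_3_def bracket_coordinates)

lemma trace_quadratic_A2_1_2A1_e2: "trace_quadratic 1 (-2) A2_1_2A1 (e 2) = -1"
  by (simp add: trace_quadratic_def A2_1_2A1_def bracket_coordinates)

lemma trace_quadratic_A3_4_A1_e3: "trace_quadratic 1 (-2) (A3_4_A1 a) (e 3) = - (1 - a)\<^sup>2"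
  by (simp add: trace_quadratic_def A3_4_A1_def bracket_coordinates)

lemma trace_quadratic_A3_5_A1_e3: "trace_quadratic (-1) 2 (A3_5_A1 b) (e 3) = -4"
  by (simp add: trace_quadratic_def A3_5_A1_def bracket_coordinates)

theorem mainTheorem8:
  shows "not_contraction so3_A1 A4_8m1 \<and>
    not_contraction so3_A1 A3_4m1_A1 \<and>
    not_contraction A4_8m1 A3_5_0_A1 \<and>
    not_contraction A4_9_0 A3_4m1_A1 \<and>
    not_contraction A4_10 A4_3 \<and>
    not_contraction A4_10 A2_1_2A1 \<and>
    (\<forall>a::real. 0 < \<bar>a\<bar> \<and> \<bar>a\<bar> < 1 \<longrightarrow> not_contraction A4_10 (A3_4_A1 a)) \<and>
    (\<forall>b::real. 0 < b \<longrightarrow> not_contraction two_A2_1 (A3_5_A1 b))"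
proof (intro conjI allI impI)
  show "not_contraction so3_A1 A4_8m1"
    by (rule not_contraction_by_trace_quadratic[where \<alpha> = 0 and \<beta> = "-1" and w = "e 4"])
      (simp_all add: linear_brackets trace_quadratic_so3_A1 add_nonneg_nonneg
        trace_quadratic_A4_8m1_e4)
  show "not_contraction so3_A1 A3_4m1_A1"
    by (rule not_contraction_by_trace_quadratic[where \<alpha> = 0 and \<beta> = "-1" and w = "e 3"])
      (simp_all add: linear_brackets trace_quadratic_so3_A1 add_nonneg_nonneg
        trace_quadratic_A3_4m1_A1_e3)
  show "not_contraction A4_8m1 A3_5_0_A1"
    by (rule not_contraction_by_trace_quadratic[where \<alpha> = 0 and \<beta> = 1 and w = "e 3"])
      (simp_all add: linear_brackets trace_quadratic_A4_8m1 trace_quadratic_A3_5_0_A1_e3)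
  show "not_contraction A4_9_0 A3_4m1_A1"
    by (rule not_contraction_by_trace_quadratic[where \<alpha> = 0 and \<beta> = "-1" and w = "e 3"])
      (simp_all add: linear_brackets trace_quadratic_A4_9_0 trace_quadratic_A3_4m1_A1_e3)
  show "not_contraction A4_10 A4_3"
    by (rule not_contraction_by_trace_quadratic[where \<alpha> = 1 and \<beta> = "-2" and w = "e 4"])
      (simp_all add: linear_brackets trace_quadratic_A4_10 trace_quadratic_A4_3_e4)
  show "not_contraction A4_10 A2_1_2A1"
    by (rule not_contraction_by_trace_quadratic[where \<alpha> = 1 and \<beta> = "-2" and w = "e 2"])
      (simp_all add: linear_brackets trace_quadratic_A4_10 trace_quadratic_A2_1_2A1_e2)
next
  fix a :: real
  assume "0 < \<bar>a\<bar> \<and> \<bar>a\<bar> < 1"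
  then have "a \<noteq> 1"
    by auto
  then have "trace_quadratic 1 (-2) (A3_4_A1 a) (e 3) < 0"
    by (simp add: trace_quadratic_A3_4_A1_e3)
  then show "not_contraction A4_10 (A3_4_A1 a)"
    by (rule not_contraction_by_trace_quadratic[rotated])
      (simp_all add: linear_brackets trace_quadratic_A4_10)
next
  fix b :: real
  \<comment> \<open>The separating value is \<open>-4\<close> for every \<open>b\<close>.\<close>
  show "not_contraction two_A2_1 (A3_5_A1 b)"
    by (rule not_contraction_by_trace_quadratic[where \<alpha> = "-1" and \<beta> = 2 and w = "e 3"])
      (simp_all add: linear_brackets trace_quadratic_two_A2_1 trace_quadratic_A3_5_A1_e3)
qed

end
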